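(* Let $n\ge3$ and let $G\colon[-2,2]\to\mathbb{R}^n$ be defined as in the context. For $T=(T_0,\dots,T_{n-2})\in[1,\infty)^{n-1}$ let $$\mathcal{F}(T):=\Big\{\sum_{r=0}^{n-2}s_rG^{(r)}(t): t\in[-2,2],\ |s_r|\leq T_r\ (0\le r\le n-2)\Big\},$$ for $\sigma>0$ let $\mathcal{F}_\sigma(T)$ be the Euclidean $\sigma$-neighbourhood of $\mathcal{F}(T)$, and let $\mathcal{L}_\sigma(T):=\mathcal{F}_\sigma(T)\cap\mathbb{Z}^n$. Then for all $R\geq T_0,\dots,T_{n-2}\geq\sigma\geq1$, $$\#\mathcal{L}_\sigma(T)\leq C\,R\prod_{r=0}^{n-2}T_r,$$ where $C$ depends only on $\sigma$, $n$ and the curve.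
   Context: Let $\gamma(t)=(t,f(t))$ with $f\colon U\to\mathbb{R}^{n-1}$ smooth on an open set $U\supset[-2,2]$ and $\det[\gamma^{(1)}(t)\ \cdots\ \gamma^{(n)}(t)]\neq0$ for $t\in U$. Let $\mathbf{e}_1(t),\dots,\mathbf{e}_n(t)$ be the Frenet frame, i.e. the orthonormal system obtained by applying Gram–Schmidt to $\gamma^{(1)}(t),\dots,\gamma^{(n)}(t)$. Standing assumption of the paper: the $n$-th component $\mathbf{e}_{n,n}(t)$ of $\mathbf{e}_n(t)$ is nonzero for all $t\in U$. Define $G(t):=\mathbf{e}_n(t)/\mathbf{e}_{n,n}(t)$; $G^{(r)}$ denotes its $r$-th derivative ($G^{(0)}=G$). *)

theory Defs
  imports "HOL-Analysis.Derivative" "Jordan_Normal_Form.Determinant"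
begin

(* Vectors of R^n are represented as functions nat => real, only the
   coordinates 0..n-1 are relevant (coordinate i here = coordinate i+1 of the paper). *)

definition ipn :: "nat \<Rightarrow> (nat \<Rightarrow> real) \<Rightarrow> (nat \<Rightarrow> real) \<Rightarrow> real" where
  "ipn n v w = (\<Sum>i<n. v i * w i)"

definition smooth_on_real :: "real set \<Rightarrow> (real \<Rightarrow> real) \<Rightarrow> bool" where
  "smooth_on_real U g \<longleftrightarrow> (\<forall>k. \<forall>t\<in>U. ((deriv ^^ k) g) differentiable (at t))"

definition gam :: "(nat \<Rightarrow> real \<Rightarrow> real) \<Rightarrow> real \<Rightarrow> nat \<Rightarrow> real" where
  "gam f t i = (if i = 0 then t else f i t)"

definition vder :: "nat \<Rightarrow> (real \<Rightarrow> nat \<Rightarrow> real) \<Rightarrow> real \<Rightarrow> nat \<Rightarrow> real" where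
  "vder k c t i = (deriv ^^ k) (\<lambda>s. c s i) t"

fun gs_list :: "nat \<Rightarrow> (nat \<Rightarrow> nat \<Rightarrow> real) \<Rightarrow> nat \<Rightarrow> (nat \<Rightarrow> real) list" where
  "gs_list n v 0 = []"
| "gs_list n v (Suc k) =
     (let es = gs_list n v k;
          u = (\<lambda>i. v (Suc k) i - (\<Sum>e\<leftarrow>es. ipn n (v (Suc k)) e * e i))
      in es @ [(\<lambda>i. u i / sqrt (ipn n u u))])"

definition frenet :: "nat \<Rightarrow> (nat \<Rightarrow> real \<Rightarrow> real) \<Rightarrow> real \<Rightarrow> nat \<Rightarrow> nat \<Rightarrow> real" where
  "frenet n f t k = gs_list n (\<lambda>j. vder j (gam f) t) n ! (k - 1)"

definition Gfun :: "nat \<Rightarrow> (nat \<Rightarrow> real \<Rightarrow> real) \<Rightarrow> real \<Rightarrow> nat \<Rightarrow> real" where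
  "Gfun n f t i = frenet n f t n i / frenet n f t n (n - 1)"

definition FT :: "nat \<Rightarrow> (nat \<Rightarrow> real \<Rightarrow> real) \<Rightarrow> (nat \<Rightarrow> real) \<Rightarrow> (nat \<Rightarrow> real) set" where
  "FT n f T = {x. \<exists>t\<in>{-2..2}. \<exists>s. (\<forall>r<n-1. \<bar>s r\<bar> \<le> T r) \<and>
                  x = (\<lambda>i. \<Sum>r<n-1. s r * vder r (Gfun n f) t i)}"

(* L_sigma(T) = F_sigma(T) \<inter> Z^n, integer vectors of length n as functions vanishing from n on *)
definition LT :: "nat \<Rightarrow> (nat \<Rightarrow> real \<Rightarrow> real) \<Rightarrow> real \<Rightarrow> (nat \<Rightarrow> real) \<Rightarrow> (nat \<Rightarrow> int) set" where
  "LT n f \<sigma> T = {z. (\<forall>i\<ge>n. z i = 0) \<and>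
       (\<exists>x\<in>FT n f T. sqrt (\<Sum>i<n. (real_of_int (z i) - x i)\<^sup>2) < \<sigma>)}"

end

theory Submission
  imports Defs
begin

(* F(T) is covered by few translates of a fixed box. Discretise t in [-2,2] with mesh
   of order 1/R and round every coefficient s_r to an integer. The derivatives G^(r), r < n, are
   bounded and Lipschitz on [-2,2], and |s_r| <= R, so this moves sum_r s_r G^(r)(t) by O(1) in each
   coordinate. Hence every lattice point of F_sigma(T) lies in a box of bounded size around one of
   O(R) * prod_r (2 T_r + 1) points, which gives the bound.
   Most of the work is the smoothness of G: Gram-Schmidt applied to the linearly independent
   vectors gamma^(1)(t), ..., gamma^(n)(t) only uses sums, products, square roots of positive and
   quotients by non-vanishing smooth functions. *)

section \<open>Smooth functions\<close>

lemma real_field_differentiable_iff: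
  fixes g :: "real \<Rightarrow> real"
  shows "g field_differentiable (at t) \<longleftrightarrow> g differentiable (at t)"
  by (simp add: field_differentiable_def real_differentiable_def)

lemma smooth_on_real_iff_deriv:
  "smooth_on_real U g \<longleftrightarrow> (\<forall>t\<in>U. g differentiable (at t)) \<and> smooth_on_real U (deriv g)"
proof -
  have all_nat: "(\<forall>k. P k) \<longleftrightarrow> P 0 \<and> (\<forall>k. P (Suc k))" for P :: "nat \<Rightarrow> bool"
    by (metis not0_implies_Suc)
  have "(deriv ^^ Suc k) g = (deriv ^^ k) (deriv g)" for k
    by (simp only: funpow_Suc_right o_apply)
  then show ?thesis
    unfolding smooth_on_real_def all_nat[where P = "\<lambda>k. \<forall>t\<in>U. (deriv ^^ k) g differentiable (at t)"]
    by simp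
qed

lemma smooth_on_real_differentiable:
  "smooth_on_real U g \<Longrightarrow> t \<in> U \<Longrightarrow> g differentiable (at t)"
  using smooth_on_real_iff_deriv by blast

lemma smooth_on_real_deriv:
  "smooth_on_real U g \<Longrightarrow> smooth_on_real U (deriv g)"
  using smooth_on_real_iff_deriv by blast

lemma smooth_on_real_higher_deriv:
  "smooth_on_real U g \<Longrightarrow> smooth_on_real U ((deriv ^^ k) g)"
  by (induction k) (simp_all add: smooth_on_real_deriv)

lemma smooth_on_real_const: "smooth_on_real U (\<lambda>_. c)"
proof -
  have "(deriv ^^ k) (\<lambda>_. c) = (\<lambda>_. if k = 0 then c else 0)" for k
    by (induction k) (simp_all add: deriv_const)
  then show ?thesis
    unfolding smooth_on_real_def by simp
qed

lemma smooth_on_real_ident: "smooth_on_real U (\<lambda>x. x)"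
  by (subst smooth_on_real_iff_deriv) (simp add: smooth_on_real_const)

lemma differentiable_transform_within_open:
  fixes g h :: "real \<Rightarrow> real"
  assumes "g differentiable (at t)" "open U" "t \<in> U" "\<And>x. x \<in> U \<Longrightarrow> g x = h x"
  shows "h differentiable (at t)"
  using assms has_derivative_transform_within_open unfolding differentiable_def by blast

lemma smooth_on_real_coinduct:
  assumes "open U" and "P g"
    and differentiable: "\<And>g t. P g \<Longrightarrow> t \<in> U \<Longrightarrow> g differentiable (at t)"
    and deriv: "\<And>g. P g \<Longrightarrow> \<exists>g'. P g' \<and> (\<forall>t\<in>U. deriv g t = g' t)"
  shows "smooth_on_real U g"
proof -
  have "\<exists>h. P h \<and> (\<forall>t\<in>U. (deriv ^^ k) g t = h t)" for k
  proof (induction k)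
    case 0
    show ?case using \<open>P g\<close> by auto
  next
    case (Suc k)
    then obtain h where "P h" and h: "\<forall>t\<in>U. (deriv ^^ k) g t = h t" by blast
    obtain h' where "P h'" and h': "\<forall>t\<in>U. deriv h t = h' t" using deriv[OF \<open>P h\<close>] by blast
    have "(deriv ^^ Suc k) g t = h' t" if "t \<in> U" for t
    proof -
      have "\<forall>\<^sub>F x in nhds t. (deriv ^^ k) g x = h x"
        using h \<open>open U\<close> that by (auto simp: eventually_nhds)
      then have "deriv ((deriv ^^ k) g) t = deriv h t" by (rule deriv_cong_ev) simp
      then show ?thesis using h' that by simp
    qed
    then show ?case using \<open>P h'\<close> by blast
  qed
  then show ?thesis
    unfolding smooth_on_real_def
    by (metis differentiable differentiable_transform_within_open \<open>open U\<close>)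
qed

lemma has_real_derivative_powr_multiple:
  assumes g: "\<And>x. x > 0 \<Longrightarrow> g x = c * x powr a" and t: "t > 0"
  shows "(g has_real_derivative c * a * t powr (a - 1)) (at t)"
proof -
  have "((\<lambda>x. c * x powr a) has_real_derivative c * (a * t powr (a - 1))) (at t)"
    using t by (intro DERIV_cmult has_real_derivative_powr)
  then have "((\<lambda>x. c * x powr a) has_real_derivative c * a * t powr (a - 1)) (at t)"
    by (simp only: mult.assoc)
  moreover have "open {0::real<..}" by simp
  ultimately show ?thesis
    by (rule has_field_derivative_transform_within_open) (use t g in auto)
qed

lemma smooth_on_real_powr_multiple:
  assumes "\<And>x. x > 0 \<Longrightarrow> g x = c * x powr a"
  shows "smooth_on_real {0<..} g"
proof (rule smooth_on_real_coinduct[where P = "\<lambda>g. \<exists>c a. \<forall>x>0. g x = c * x powr a"])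
  fix g :: "real \<Rightarrow> real"
  assume "\<exists>c a. \<forall>x>0. g x = c * x powr a"
  then obtain c a where g: "\<And>x. x > 0 \<Longrightarrow> g x = c * x powr a" by blast
  show "g differentiable (at t)" if "t \<in> {0<..}" for t
    using has_real_derivative_powr_multiple[OF g] that by (auto simp: real_differentiable_def)
  have "\<forall>t\<in>{0<..}. deriv g t = (c * a) * t powr (a - 1)"
    using has_real_derivative_powr_multiple[OF g] by (auto intro: DERIV_imp_deriv)
  then show "\<exists>g'. (\<exists>c a. \<forall>x>0. g' x = c * x powr a) \<and> (\<forall>t\<in>{0<..}. deriv g t = g' t)"
    by blast
qed (use assms in auto)

(* A proof device: the derivative of such an expression agrees on U with another one, so
   smooth_on_real_coinduct shows that all of them are smooth. *)
inductive smooth_expr :: "real set \<Rightarrow> (real \<Rightarrow> real) \<Rightarrow> bool" for U where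
  smooth: "smooth_on_real U g \<Longrightarrow> smooth_expr U g"
| add: "smooth_expr U g \<Longrightarrow> smooth_expr U h \<Longrightarrow> smooth_expr U (\<lambda>x. g x + h x)"
| mult: "smooth_expr U g \<Longrightarrow> smooth_expr U h \<Longrightarrow> smooth_expr U (\<lambda>x. g x * h x)"
| compose: "open V \<Longrightarrow> smooth_on_real V \<phi> \<Longrightarrow> smooth_expr U g \<Longrightarrow> g ` U \<subseteq> V \<Longrightarrow>
    smooth_expr U (\<lambda>x. \<phi> (g x))"

lemma smooth_expr_differentiable:
  "smooth_expr U g \<Longrightarrow> t \<in> U \<Longrightarrow> g differentiable (at t)"
proof (induction g rule: smooth_expr.induct)
  case (compose V \<phi> g)
  then have "\<phi> differentiable (at (g t))"
    by (auto intro: smooth_on_real_differentiable)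
  with compose show ?case
    using differentiable_chain_at[of g t \<phi>] by (simp add: o_def)
qed (auto intro: smooth_on_real_differentiable)

lemma smooth_expr_deriv:
  assumes "open U" "smooth_expr U g"
  shows "\<exists>g'. smooth_expr U g' \<and> (\<forall>t\<in>U. deriv g t = g' t)"
  using assms(2)
proof (induction g rule: smooth_expr.induct)
  case (smooth g)
  then show ?case by (auto intro: smooth_expr.smooth smooth_on_real_deriv)
next
  case (add g h)
  then obtain g' h' where "smooth_expr U g'" "smooth_expr U h'"
    and "\<forall>t\<in>U. deriv g t = g' t" "\<forall>t\<in>U. deriv h t = h' t" by blast
  moreover have "deriv (\<lambda>x. g x + h x) t = deriv g t + deriv h t" if "t \<in> U" for t
    using add.hyps that by (intro deriv_add) (auto simp: real_field_differentiable_iff smooth_expr_differentiable)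
  ultimately show ?case by (auto intro!: exI[of _ "\<lambda>x. g' x + h' x"] smooth_expr.add)
next
  case (mult g h)
  then obtain g' h' where "smooth_expr U g'" "smooth_expr U h'"
    and "\<forall>t\<in>U. deriv g t = g' t" "\<forall>t\<in>U. deriv h t = h' t" by blast
  moreover have "deriv (\<lambda>x. g x * h x) t = g t * deriv h t + deriv g t * h t" if "t \<in> U" for t
    using mult.hyps that by (intro deriv_mult) (auto simp: real_field_differentiable_iff smooth_expr_differentiable)
  ultimately show ?case
    using mult.hyps by (auto intro!: exI[of _ "\<lambda>x. g x * h' x + g' x * h x"] smooth_expr.add smooth_expr.mult)
next
  case (compose V \<phi> g)
  then obtain g' where "smooth_expr U g'" and g': "\<forall>t\<in>U. deriv g t = g' t" by blast
  have "deriv (\<lambda>x. \<phi> (g x)) t = deriv \<phi> (g t) * deriv g t" if "t \<in> U" for t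
  proof -
    have "g differentiable (at t)"
      using compose.hyps(3) that by (rule smooth_expr_differentiable)
    moreover have "\<phi> differentiable (at (g t))"
      using compose.hyps(2,4) that by (blast intro: smooth_on_real_differentiable)
    ultimately show ?thesis
      using deriv_chain[of g t \<phi>] by (simp add: o_def real_field_differentiable_iff)
  qed
  moreover have "smooth_expr U (\<lambda>x. deriv \<phi> (g x))"
    using compose.hyps by (blast intro: smooth_expr.compose smooth_on_real_deriv)
  ultimately show ?case
    using \<open>smooth_expr U g'\<close> g' by (auto intro!: exI[of _ "\<lambda>x. deriv \<phi> (g x) * g' x"] smooth_expr.mult)
qed

lemma smooth_on_real_smooth_expr:
  "open U \<Longrightarrow> smooth_expr U g \<Longrightarrow> smooth_on_real U g"
  by (rule smooth_on_real_coinduct[where P = "smooth_expr U"])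
    (auto intro: smooth_expr_differentiable smooth_expr_deriv)

lemma smooth_on_real_add:
  "open U \<Longrightarrow> smooth_on_real U g \<Longrightarrow> smooth_on_real U h \<Longrightarrow> smooth_on_real U (\<lambda>x. g x + h x)"
  by (blast intro: smooth_on_real_smooth_expr smooth_expr.add smooth_expr.smooth)

lemma smooth_on_real_mult:
  "open U \<Longrightarrow> smooth_on_real U g \<Longrightarrow> smooth_on_real U h \<Longrightarrow> smooth_on_real U (\<lambda>x. g x * h x)"
  by (blast intro: smooth_on_real_smooth_expr smooth_expr.mult smooth_expr.smooth)

lemma smooth_on_real_compose:
  "open U \<Longrightarrow> open V \<Longrightarrow> smooth_on_real V \<phi> \<Longrightarrow> smooth_on_real U g \<Longrightarrow> g ` U \<subseteq> V \<Longrightarrow>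
    smooth_on_real U (\<lambda>x. \<phi> (g x))"
  by (blast intro: smooth_on_real_smooth_expr smooth_expr.compose smooth_expr.smooth)

lemma smooth_on_real_diff:
  assumes "open U" "smooth_on_real U g" "smooth_on_real U h"
  shows "smooth_on_real U (\<lambda>x. g x - h x)"
proof -
  have "smooth_on_real U (\<lambda>x. g x + (-1) * h x)"
    by (rule smooth_on_real_add[OF assms(1,2) smooth_on_real_mult[OF assms(1) smooth_on_real_const assms(3)]])
  then show ?thesis by simp
qed

lemma smooth_on_real_sum:
  "open U \<Longrightarrow> (\<And>a. a \<in> A \<Longrightarrow> smooth_on_real U (g a)) \<Longrightarrow> smooth_on_real U (\<lambda>x. \<Sum>a\<in>A. g a x)"
  by (induction A rule: infinite_finite_induct) (auto simp: smooth_on_real_const smooth_on_real_add)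

lemma smooth_on_real_sqrt:
  assumes "open U" "smooth_on_real U g" "\<And>t. t \<in> U \<Longrightarrow> g t > 0"
  shows "smooth_on_real U (\<lambda>x. sqrt (g x))"
proof (rule smooth_on_real_compose[OF assms(1) open_greaterThan _ assms(2)])
  show "smooth_on_real {0<..} sqrt"
    by (rule smooth_on_real_powr_multiple[where c = 1 and a = "1/2"]) (simp add: powr_half_sqrt)
qed (use assms(3) in auto)

lemma smooth_on_real_divide:
  assumes "open U" "smooth_on_real U g" "smooth_on_real U h" "\<And>t. t \<in> U \<Longrightarrow> h t \<noteq> 0"
  shows "smooth_on_real U (\<lambda>x. g x / h x)"
proof -
  \<comment> \<open>inverse is only known to be smooth on the positive reals; the identity used below
    holds even where h vanishes, as inverse 0 = 0\<close>
  have "smooth_on_real U (\<lambda>x. inverse (h x * h x))"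
  proof (rule smooth_on_real_compose[where \<phi> = inverse, OF assms(1) open_greaterThan])
    show "smooth_on_real {0<..} inverse"
      by (rule smooth_on_real_powr_multiple[where c = 1 and a = "-1"]) (simp add: powr_minus)
  qed (use assms in \<open>auto intro: smooth_on_real_mult simp: less_le\<close>)
  then have "smooth_on_real U (\<lambda>x. g x * h x * inverse (h x * h x))"
    by (rule smooth_on_real_mult[OF assms(1) smooth_on_real_mult[OF assms(1-3)]])
  moreover have "g x * h x * inverse (h x * h x) = g x / h x" for x
    by (simp add: field_simps)
  ultimately show ?thesis by simp
qed

lemma uniform_bound_finite_family:
  fixes h :: "'a \<Rightarrow> real \<Rightarrow> real"
  assumes "finite A" "compact S" "\<And>x. x \<in> A \<Longrightarrow> continuous_on S (h x)"
  shows "\<exists>M>0. \<forall>x\<in>A. \<forall>t\<in>S. \<bar>h x t\<bar> \<le> M"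
proof -
  have "bounded (\<Union>x\<in>A. h x ` S)"
    using assms by (intro bounded_UN) (auto intro: compact_imp_bounded compact_continuous_image)
  then show ?thesis
    unfolding bounded_pos by auto
qed

lemma abs_diff_le_if_deriv_bound:
  fixes g :: "real \<Rightarrow> real"
  assumes "\<And>x. x \<in> {a..b} \<Longrightarrow> g differentiable (at x)"
    and "\<And>x. x \<in> {a..b} \<Longrightarrow> \<bar>deriv g x\<bar> \<le> B"
    and "s \<in> {a..b}" "t \<in> {a..b}"
  shows "\<bar>g s - g t\<bar> \<le> B * \<bar>s - t\<bar>"
proof -
  have "(g has_real_derivative deriv g x) (at x within {a..b})" if "x \<in> {a..b}" for x
    using assms(1)[OF that] by (simp add: DERIV_deriv_iff_real_differentiable has_field_derivative_at_within)
  then show ?thesis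
    using field_differentiable_bound[of "{a..b}" g "deriv g" B s t] assms(2-4) by auto
qed

lemma higher_derivs_bounded_lipschitz:
  fixes g :: "nat \<Rightarrow> real \<Rightarrow> real"
  assumes "{a..b} \<subseteq> U" and smooth: "\<And>i. i < n \<Longrightarrow> smooth_on_real U (g i)"
  obtains M where "M > 0"
    and "\<And>r i t. r \<le> m \<Longrightarrow> i < n \<Longrightarrow> t \<in> {a..b} \<Longrightarrow> \<bar>(deriv ^^ r) (g i) t\<bar> \<le> M"
    and "\<And>r i t t'. r < m \<Longrightarrow> i < n \<Longrightarrow> t \<in> {a..b} \<Longrightarrow> t' \<in> {a..b} \<Longrightarrow>
      \<bar>(deriv ^^ r) (g i) t - (deriv ^^ r) (g i) t'\<bar> \<le> M * \<bar>t - t'\<bar>"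
proof -
  have differentiable: "(deriv ^^ r) (g i) differentiable (at t)" if "i < n" "t \<in> {a..b}" for r i t
    using smooth_on_real_differentiable[OF smooth_on_real_higher_deriv[OF smooth]] assms(1) that by blast
  have "continuous_on {a..b} ((deriv ^^ r) (g i))" if "i < n" for r i
    using differentiable[OF that] by (meson continuous_at_imp_continuous_on differentiable_imp_continuous_within)
  then obtain M where "M > 0" and "\<forall>(r, i)\<in>{..m} \<times> {..<n}. \<forall>t\<in>{a..b}. \<bar>(deriv ^^ r) (g i) t\<bar> \<le> M"
    using uniform_bound_finite_family[of "{..m} \<times> {..<n}" "{a..b}" "\<lambda>(r, i). (deriv ^^ r) (g i)"] by auto
  then have bound: "\<bar>(deriv ^^ r) (g i) t\<bar> \<le> M" if "r \<le> m" "i < n" "t \<in> {a..b}" for r i t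
    using that by blast
  have lipschitz: "\<bar>(deriv ^^ r) (g i) t - (deriv ^^ r) (g i) t'\<bar> \<le> M * \<bar>t - t'\<bar>"
    if "r < m" "i < n" "t \<in> {a..b}" "t' \<in> {a..b}" for r i t t'
    using that bound[of "Suc r" i] by (intro abs_diff_le_if_deriv_bound[OF differentiable]) auto
  show ?thesis
    by (rule that[OF \<open>M > 0\<close> bound lipschitz])
qed

section \<open>Gram--Schmidt\<close>

definition gs_residual :: "nat \<Rightarrow> (nat \<Rightarrow> nat \<Rightarrow> real) \<Rightarrow> nat \<Rightarrow> nat \<Rightarrow> real" where
  "gs_residual n v k = (\<lambda>i. v (Suc k) i - (\<Sum>e\<leftarrow>gs_list n v k. ipn n (v (Suc k)) e * e i))"

lemma length_gs_list [simp]: "length (gs_list n v k) = k"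
  by (induction k) (simp_all add: Let_def)

lemma nth_gs_list_Suc_less: "q < k \<Longrightarrow> gs_list n v (Suc k) ! q = gs_list n v k ! q"
  by (simp add: Let_def nth_append)

lemma nth_gs_list_Suc_last:
  "gs_list n v (Suc k) ! k = (\<lambda>i. gs_residual n v k i / sqrt (ipn n (gs_residual n v k) (gs_residual n v k)))"
  by (simp add: Let_def nth_append gs_residual_def)

lemma ipn_self_pos: "i < n \<Longrightarrow> u i \<noteq> 0 \<Longrightarrow> 0 < ipn n u u"
  unfolding ipn_def by (intro sum_pos2[of "{..<n}" i]) (auto simp: zero_less_mult_iff linorder_neq_iff)

definition first_span :: "nat \<Rightarrow> (nat \<Rightarrow> nat \<Rightarrow> real) \<Rightarrow> nat \<Rightarrow> (nat \<Rightarrow> real) set" where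
  "first_span n v k = {x. \<exists>c. \<forall>i<n. x i = (\<Sum>j<k. c j * v (Suc j) i)}"

lemma first_span_zero: "(\<lambda>_. 0) \<in> first_span n v k"
  unfolding first_span_def by (auto intro: exI[of _ "\<lambda>_. 0"])

lemma first_span_add:
  assumes "x \<in> first_span n v k" "y \<in> first_span n v k"
  shows "(\<lambda>i. x i + y i) \<in> first_span n v k"
proof -
  obtain c d where c: "\<And>i. i < n \<Longrightarrow> x i = (\<Sum>j<k. c j * v (Suc j) i)"
    and d: "\<And>i. i < n \<Longrightarrow> y i = (\<Sum>j<k. d j * v (Suc j) i)"
    using assms unfolding first_span_def by blast
  have "x i + y i = (\<Sum>j<k. (c j + d j) * v (Suc j) i)" if "i < n" for i
    unfolding c[OF that] d[OF that] distrib_right sum.distrib ..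
  then show ?thesis
    unfolding first_span_def by (intro CollectI exI[of _ "\<lambda>j. c j + d j"] allI impI)
qed

lemma first_span_scale:
  assumes "x \<in> first_span n v k"
  shows "(\<lambda>i. a * x i) \<in> first_span n v k"
proof -
  obtain c where c: "\<And>i. i < n \<Longrightarrow> x i = (\<Sum>j<k. c j * v (Suc j) i)"
    using assms unfolding first_span_def by blast
  have "a * x i = (\<Sum>j<k. (a * c j) * v (Suc j) i)" if "i < n" for i
    unfolding c[OF that] sum_distrib_left mult.assoc ..
  then show ?thesis
    unfolding first_span_def by (intro CollectI exI[of _ "\<lambda>j. a * c j"] allI impI)
qed

lemma first_span_Suc:
  assumes "x \<in> first_span n v k"
  shows "x \<in> first_span n v (Suc k)"
proof -
  obtain c where "\<forall>i<n. x i = (\<Sum>j<k. c j * v (Suc j) i)"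
    using assms unfolding first_span_def by blast
  then have "\<forall>i<n. x i = (\<Sum>j<Suc k. (c(k := 0)) j * v (Suc j) i)"
    by simp
  then show ?thesis unfolding first_span_def by blast
qed

lemma first_span_last: "v (Suc k) \<in> first_span n v (Suc k)"
  unfolding first_span_def by (auto intro!: exI[of _ "\<lambda>j. if j = k then 1 else 0"])

lemma sum_list_in_first_span:
  "(\<And>e. e \<in> set es \<Longrightarrow> e \<in> first_span n v k) \<Longrightarrow> (\<lambda>i. \<Sum>e\<leftarrow>es. a e * e i) \<in> first_span n v k"
proof (induction es)
  case (Cons e es)
  then show ?case
    using first_span_add[OF first_span_scale[of e] Cons.IH] by simp
qed (simp add: first_span_zero)

lemma gs_residual_in_first_span:
  assumes "\<And>q. q < k \<Longrightarrow> gs_list n v k ! q \<in> first_span n v k"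
  shows "gs_residual n v k \<in> first_span n v (Suc k)"
proof -
  have "(\<lambda>i. \<Sum>e\<leftarrow>gs_list n v k. ipn n (v (Suc k)) e * e i) \<in> first_span n v k"
    using assms by (intro sum_list_in_first_span) (auto simp: in_set_conv_nth)
  then have "(\<lambda>i. v (Suc k) i + -1 * (\<Sum>e\<leftarrow>gs_list n v k. ipn n (v (Suc k)) e * e i)) \<in> first_span n v (Suc k)"
    by (intro first_span_add first_span_last first_span_scale first_span_Suc)
  then show ?thesis by (simp add: gs_residual_def)
qed

lemma gs_list_in_first_span: "q < k \<Longrightarrow> gs_list n v k ! q \<in> first_span n v k"
proof (induction k arbitrary: q)
  case (Suc k)
  show ?case
  proof (cases "q < k")
    case True
    then show ?thesis
      unfolding nth_gs_list_Suc_less[OF True] by (intro first_span_Suc Suc.IH)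
  next
    case False
    then have "q = k" using Suc.prems by simp
    have "gs_residual n v k \<in> first_span n v (Suc k)"
      using Suc.IH by (rule gs_residual_in_first_span)
    then show ?thesis
      unfolding \<open>q = k\<close> nth_gs_list_Suc_last divide_inverse mult.commute[of _ "inverse _"]
      by (rule first_span_scale)
  qed
qed simp

lemma not_in_first_span_if_det_nonzero:
  fixes v :: "nat \<Rightarrow> nat \<Rightarrow> real"
  assumes det: "det (mat n n (\<lambda>(i, j). v (j + 1) i)) \<noteq> 0" and "k < n"
  shows "v (Suc k) \<notin> first_span n v k"
proof
  assume "v (Suc k) \<in> first_span n v k"
  then obtain c where c: "\<And>i. i < n \<Longrightarrow> v (Suc k) i = (\<Sum>j<k. c j * v (Suc j) i)"
    unfolding first_span_def by blast
  define A where "A = mat n n (\<lambda>(i, j). v (j + 1) i)"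
  define w :: "real vec" where "w = vec n (\<lambda>j. if j < k then c j else if j = k then -1 else 0)"
  have "A *\<^sub>v w = 0\<^sub>v n"
  proof (rule eq_vecI)
    fix i assume "i < dim_vec (0\<^sub>v n)"
    then have i: "i < n" by simp
    have "vec_index (A *\<^sub>v w) i = (\<Sum>j<n. v (Suc j) i * vec_index w j)"
      using i by (simp add: A_def w_def scalar_prod_def atLeast0LessThan)
    also have "\<dots> = (\<Sum>j<Suc k. v (Suc j) i * vec_index w j)"
      using \<open>k < n\<close> by (intro sum.mono_neutral_right) (auto simp: w_def)
    also have "\<dots> = 0"
      using \<open>k < n\<close> c[OF i] by (simp add: w_def mult.commute)
    finally show "vec_index (A *\<^sub>v w) i = vec_index (0\<^sub>v n) i" using i by simp
  qed (simp add: A_def)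
  moreover have "w \<noteq> 0\<^sub>v n"
    using \<open>k < n\<close> by (auto simp: w_def dest!: arg_cong[where f = "\<lambda>x. vec_index x k"])
  moreover have "A \<in> carrier_mat n n" "w \<in> carrier_vec n"
    by (simp_all add: A_def w_def)
  ultimately have "det A = 0"
    using det_0_iff_vec_prod_zero by blast
  then show False using det by (simp add: A_def)
qed

lemma gs_residual_nonzero:
  assumes "det (mat n n (\<lambda>(i, j). v (j + 1) i)) \<noteq> 0" and "k < n"
  shows "\<exists>i<n. gs_residual n v k i \<noteq> 0"
proof (rule ccontr)
  assume "\<not> ?thesis"
  then have "\<forall>i<n. v (Suc k) i = (\<Sum>e\<leftarrow>gs_list n v k. ipn n (v (Suc k)) e * e i)"
    by (simp add: gs_residual_def)
  moreover have "(\<lambda>i. \<Sum>e\<leftarrow>gs_list n v k. ipn n (v (Suc k)) e * e i) \<in> first_span n v k"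
    by (intro sum_list_in_first_span) (auto simp: in_set_conv_nth gs_list_in_first_span)
  ultimately have "v (Suc k) \<in> first_span n v k"
    unfolding first_span_def by simp
  with not_in_first_span_if_det_nonzero[OF assms] show False ..
qed

lemma smooth_on_real_gs_list:
  fixes v :: "real \<Rightarrow> nat \<Rightarrow> nat \<Rightarrow> real"
  assumes U: "open U"
    and v: "\<And>j i. i < n \<Longrightarrow> smooth_on_real U (\<lambda>t. v t j i)"
    and det: "\<And>t. t \<in> U \<Longrightarrow> det (mat n n (\<lambda>(i, j). v t (j + 1) i)) \<noteq> 0"
  shows "k \<le> n \<Longrightarrow> q < k \<Longrightarrow> i < n \<Longrightarrow> smooth_on_real U (\<lambda>t. (gs_list n (v t) k ! q) i)"
proof (induction k arbitrary: q i)
  case (Suc k)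
  have IH: "smooth_on_real U (\<lambda>t. (gs_list n (v t) k ! q) i)" if "q < k" "i < n" for q i
    using Suc.IH Suc.prems(1) that by simp
  have ipn: "smooth_on_real U (\<lambda>t. ipn n (a t) (b t))"
    if "\<And>i. i < n \<Longrightarrow> smooth_on_real U (\<lambda>t. a t i)" "\<And>i. i < n \<Longrightarrow> smooth_on_real U (\<lambda>t. b t i)" for a b
    unfolding ipn_def using that by (intro smooth_on_real_sum[OF U] smooth_on_real_mult[OF U]) auto
  have residual: "smooth_on_real U (\<lambda>t. gs_residual n (v t) k i)" if "i < n" for i
  proof -
    have "smooth_on_real U (\<lambda>t. \<Sum>q<k. ipn n (v t (Suc k)) (gs_list n (v t) k ! q) * (gs_list n (v t) k ! q) i)"
      using that by (intro smooth_on_real_sum[OF U] smooth_on_real_mult[OF U] ipn v IH) auto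
    moreover have "gs_residual n (v t) k i = v t (Suc k) i -
        (\<Sum>q<k. ipn n (v t (Suc k)) (gs_list n (v t) k ! q) * (gs_list n (v t) k ! q) i)" for t
      by (simp add: gs_residual_def sum_list_sum_nth atLeast0LessThan)
    ultimately show ?thesis
      using smooth_on_real_diff[OF U v[OF that]] by presburger
  qed
  have positive: "0 < ipn n (gs_residual n (v t) k) (gs_residual n (v t) k)" if "t \<in> U" for t
    using gs_residual_nonzero[OF det[OF that], of k] Suc.prems(1) ipn_self_pos by auto
  have norm: "smooth_on_real U (\<lambda>t. sqrt (ipn n (gs_residual n (v t) k) (gs_residual n (v t) k)))"
    using positive by (intro smooth_on_real_sqrt[OF U] ipn residual)
  show ?case
  proof (cases "q < k")
    case True
    then show ?thesis
      unfolding nth_gs_list_Suc_less[OF True] using Suc.prems(3) by (rule IH)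
  next
    case False
    then have "q = k" using Suc.prems(2) by simp
    show ?thesis
      unfolding \<open>q = k\<close> nth_gs_list_Suc_last
      using positive by (intro smooth_on_real_divide[OF U residual[OF Suc.prems(3)] norm]) force
  qed
qed simp

lemma smooth_on_real_Gfun:
  assumes "0 < n" and U: "open U"
    and f: "\<And>i. 1 \<le> i \<Longrightarrow> i < n \<Longrightarrow> smooth_on_real U (f i)"
    and det: "\<And>t. t \<in> U \<Longrightarrow> det (mat n n (\<lambda>(i, j). vder (j + 1) (gam f) t i)) \<noteq> 0"
    and "\<And>t. t \<in> U \<Longrightarrow> frenet n f t n (n - 1) \<noteq> 0"
    and "i < n"
  shows "smooth_on_real U (\<lambda>t. Gfun n f t i)"
proof -
  have "smooth_on_real U (\<lambda>t. gam f t i)" if "i < n" for i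
    using f[of i] that smooth_on_real_ident by (cases "i = 0") (simp_all add: gam_def)
  then have "smooth_on_real U (\<lambda>t. frenet n f t n i)" if "i < n" for i
    unfolding frenet_def using \<open>0 < n\<close> det that
    by (intro smooth_on_real_gs_list[OF U]) (simp_all add: vder_def smooth_on_real_higher_deriv)
  then show ?thesis
    unfolding Gfun_def using assms by (intro smooth_on_real_divide[OF U]) auto
qed

section \<open>Counting lattice points\<close>

lemma abs_le_sqrt_sum_squares:
  fixes d :: "nat \<Rightarrow> real"
  assumes "i < n"
  shows "\<bar>d i\<bar> \<le> sqrt (\<Sum>j<n. (d j)\<^sup>2)"
proof -
  have "(d i)\<^sup>2 \<le> (\<Sum>j<n. (d j)\<^sup>2)"
    using assms by (intro member_le_sum) auto
  then show ?thesis
    using real_sqrt_le_mono by fastforce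
qed

lemma abs_mult_diff_mult_le:
  fixes s \<mu> a b R M \<delta> :: real
  assumes "\<bar>s\<bar> \<le> R" "\<bar>a - b\<bar> \<le> M * \<delta>" "R * \<delta> \<le> 1 / 2" "\<bar>s - \<mu>\<bar> \<le> 1 / 2" "\<bar>b\<bar> \<le> M"
  shows "\<bar>s * a - \<mu> * b\<bar> \<le> M"
proof -
  have "M \<ge> 0"
    using assms(5) by linarith
  have "s * a - \<mu> * b = s * (a - b) + (s - \<mu>) * b"
    by (simp add: algebra_simps)
  then have "\<bar>s * a - \<mu> * b\<bar> \<le> \<bar>s\<bar> * \<bar>a - b\<bar> + \<bar>s - \<mu>\<bar> * \<bar>b\<bar>"
    by (metis abs_mult abs_triangle_ineq)
  also have "\<dots> \<le> R * (M * \<delta>) + 1 / 2 * M"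
    using assms \<open>M \<ge> 0\<close> by (intro add_mono mult_mono) auto
  also have "R * (M * \<delta>) = (R * \<delta>) * M"
    by simp
  also have "\<dots> \<le> 1 / 2 * M"
    using mult_right_mono[OF assms(3) \<open>M \<ge> 0\<close>] .
  finally show ?thesis by simp
qed

lemma round_mem_ceiling_interval:
  fixes s T :: real
  assumes "\<bar>s\<bar> \<le> T"
  shows "round s \<in> {-\<lceil>T\<rceil>..\<lceil>T\<rceil>}"
proof -
  have upper: "round s \<le> \<lceil>T\<rceil>"
    using assms ceiling_ge_round[of s] ceiling_mono[of s T] by linarith
  have "- \<lceil>T\<rceil> \<le> \<lfloor>s\<rfloor>"
    using assms floor_mono[of "- T" s] by (simp add: floor_minus)
  then have lower: "- \<lceil>T\<rceil> \<le> round s"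
    using floor_le_round[of s] by linarith
  show ?thesis
    using lower upper by simp
qed

lemma abs_diff_round_less:
  fixes z K :: int and x y \<sigma> c :: real
  assumes "\<bar>of_int z - x\<bar> < \<sigma>" "\<bar>x - y\<bar> \<le> c" "\<sigma> + c + 1 \<le> of_int K"
  shows "\<bar>z - round y\<bar> < K"
proof -
  have "\<bar>y - of_int (round y)\<bar> \<le> 1 / 2"
    using of_int_round_abs_le[of y] by (simp add: abs_minus_commute)
  then have "\<bar>of_int (z - round y)\<bar> < (of_int K :: real)"
    using assms by (simp only: abs_less_iff abs_le_iff of_int_diff) linarith
  then show ?thesis
    by (simp only: of_int_abs[symmetric] of_int_less_iff)
qed

lemma grid_point_near:
  fixes a b t :: real and N :: nat
  assumes "a < b" "t \<in> {a..b}" "N > 0"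
  shows "\<exists>k\<le>N. a + real k * ((b - a) / N) \<in> {a..b} \<and> \<bar>t - (a + real k * ((b - a) / N))\<bar> \<le> (b - a) / N / 2"
proof -
  define h where "h = (b - a) / N"
  have h: "h > 0" "real N * h = b - a"
    using assms by (simp_all add: h_def)
  define y where "y = (t - a) / h"
  have "0 \<le> y" "y \<le> real N"
    using assms h by (auto simp: y_def field_simps)
  then have "0 \<le> round y" "round y \<le> int N"
    using round_mono[of 0 y] round_mono[of y "real N"] by simp_all
  then have k: "nat (round y) \<le> N" "real (nat (round y)) = of_int (round y)"
    by simp_all
  have "real (nat (round y)) * h \<le> real N * h"
    using k(1) h(1) by (simp add: mult_right_mono)
  then have mem: "a + real (nat (round y)) * h \<in> {a..b}"
    using h by simp
  have "t - (a + real (nat (round y)) * h) = h * (y - of_int (round y))"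
    using h unfolding k(2) by (simp add: y_def field_simps)
  then have "\<bar>t - (a + real (nat (round y)) * h)\<bar> = h * \<bar>y - of_int (round y)\<bar>"
    using h by (simp add: abs_mult)
  also have "\<dots> \<le> h / 2"
    using h of_int_round_abs_le[of y] by (simp add: abs_minus_commute)
  finally show ?thesis
    using k(1) mem unfolding h_def by blast
qed

definition lattice_points_near ::
  "real set \<Rightarrow> nat \<Rightarrow> nat \<Rightarrow> (nat \<Rightarrow> real \<Rightarrow> nat \<Rightarrow> real) \<Rightarrow> real \<Rightarrow> (nat \<Rightarrow> real) \<Rightarrow> (nat \<Rightarrow> int) set"
  where "lattice_points_near I n m g \<sigma> T = {z. (\<forall>i\<ge>n. z i = 0) \<and>
    (\<exists>t\<in>I. \<exists>s. (\<forall>r<m. \<bar>s r\<bar> \<le> T r) \<and> sqrt (\<Sum>i<n. (of_int (z i) - (\<Sum>r<m. s r * g r t i))\<^sup>2) < \<sigma>)}"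

(* A lattice point z is recovered from the index k of a grid point near its parameter t,
   the rounded coefficients mu and the bounded offset w. *)
lemma lattice_points_near_subset_image:
  fixes g :: "nat \<Rightarrow> real \<Rightarrow> nat \<Rightarrow> real" and a b R M \<sigma> :: real and N :: nat and K :: int
  assumes ab: "a < b" and N: "N > 0" "(b - a) * R \<le> N" and M: "M \<ge> 0"
    and bound: "\<And>r t i. r < m \<Longrightarrow> i < n \<Longrightarrow> t \<in> {a..b} \<Longrightarrow> \<bar>g r t i\<bar> \<le> M"
    and lip: "\<And>r t t' i. r < m \<Longrightarrow> i < n \<Longrightarrow> t \<in> {a..b} \<Longrightarrow> t' \<in> {a..b} \<Longrightarrow>
      \<bar>g r t i - g r t' i\<bar> \<le> M * \<bar>t - t'\<bar>"
    and T: "\<forall>r<m. T r \<le> R" and K: "\<sigma> + m * M + 1 \<le> K"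
  shows "lattice_points_near {a..b} n m g \<sigma> T \<subseteq>
    (\<lambda>(k, \<mu>, w) i. if i < n then w i + round (\<Sum>r<m. of_int (\<mu> r) * g r (a + real k * ((b - a) / N)) i) else 0) `
      ({..N} \<times> (\<Pi>\<^sub>E r\<in>{..<m}. {-\<lceil>T r\<rceil>..\<lceil>T r\<rceil>}) \<times> (\<Pi>\<^sub>E i\<in>{..<n}. {-K..K}))"
    (is "_ \<subseteq> ?decode ` ?codes")
proof
  fix z assume "z \<in> lattice_points_near {a..b} n m g \<sigma> T"
  then obtain t s where z: "\<forall>i\<ge>n. z i = 0" and t: "t \<in> {a..b}" and s: "\<forall>r<m. \<bar>s r\<bar> \<le> T r"
    and near: "sqrt (\<Sum>i<n. (of_int (z i) - (\<Sum>r<m. s r * g r t i))\<^sup>2) < \<sigma>"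
    unfolding lattice_points_near_def by blast
  define h where "h = (b - a) / N"
  obtain k where "k \<le> N" and tk_mem: "a + real k * h \<in> {a..b}" and tk: "\<bar>t - (a + real k * h)\<bar> \<le> h / 2"
    using grid_point_near[OF ab t N(1)] unfolding h_def by blast
  have Rh: "R * (h / 2) \<le> 1 / 2"
    using N by (simp add: h_def field_simps)
  define \<mu> where "\<mu> = restrict (\<lambda>r. round (s r)) {..<m}"
  define y where "y i = (\<Sum>r<m. of_int (\<mu> r) * g r (a + real k * h) i)" for i
  define w where "w = restrict (\<lambda>i. z i - round (y i)) {..<n}"
  have summand: "\<bar>s r * g r t i - of_int (\<mu> r) * g r (a + real k * h) i\<bar> \<le> M" if "r < m" "i < n" for r i
  proof (rule abs_mult_diff_mult_le[OF _ _ Rh])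
    show "\<bar>s r\<bar> \<le> R"
      using s T that by (meson order_trans)
    show "\<bar>g r t i - g r (a + real k * h) i\<bar> \<le> M * (h / 2)"
      using lip[OF that t tk_mem] tk M by (meson mult_left_mono order_trans)
    show "\<bar>s r - of_int (\<mu> r)\<bar> \<le> 1 / 2"
      using that of_int_round_abs_le[of "s r"] by (simp add: \<mu>_def abs_minus_commute)
  qed (rule bound[OF that tk_mem])
  have w_mem: "w i \<in> {-K..K}" if "i < n" for i
  proof -
    have "\<bar>(\<Sum>r<m. s r * g r t i) - y i\<bar> \<le> (\<Sum>r<m. M)"
      unfolding y_def sum_subtractf[symmetric]
      using summand that by (intro order_trans[OF sum_abs] sum_mono) auto
    then have "\<bar>z i - round (y i)\<bar> < K"
      using le_less_trans[OF abs_le_sqrt_sum_squares[OF that] near] K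
      by (intro abs_diff_round_less[where \<sigma> = \<sigma> and c = "m * M"]) auto
    then show ?thesis
      using that by (simp add: w_def abs_less_iff)
  qed
  have "\<mu> \<in> (\<Pi>\<^sub>E r\<in>{..<m}. {-\<lceil>T r\<rceil>..\<lceil>T r\<rceil>})"
    using s round_mem_ceiling_interval by (simp add: \<mu>_def restrict_PiE_iff)
  moreover have "w \<in> (\<Pi>\<^sub>E i\<in>{..<n}. {-K..K})"
    using w_mem by (simp add: w_def restrict_PiE_iff)
  ultimately have code: "(k, \<mu>, w) \<in> ?codes"
    using \<open>k \<le> N\<close> by blast
  have "?decode (k, \<mu>, w) i = z i" for i
    using z by (cases "i < n") (simp_all add: w_def y_def h_def)
  then have "z = ?decode (k, \<mu>, w)"
    by auto
  then show "z \<in> ?decode ` ?codes"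
    using code by (rule image_eqI)
qed

lemma real_card_code_set_le:
  fixes T :: "nat \<Rightarrow> real" and K :: int and c R :: real
  assumes T: "\<forall>r<m. 1 \<le> T r" and R: "1 \<le> R" and "0 \<le> c" and N: "real N \<le> c * R + 2" and K: "0 \<le> K"
  shows "real (card ({..N} \<times> (\<Pi>\<^sub>E r\<in>{..<m}. {-\<lceil>T r\<rceil>..\<lceil>T r\<rceil>}) \<times> (\<Pi>\<^sub>E i\<in>{..<n}. {-K..K})))
    \<le> (c + 3) * 5 ^ m * (2 * of_int K + 1) ^ n * R * (\<Prod>r<m. T r)"
proof -
  have "(\<Prod>r<m. real (nat (2 * \<lceil>T r\<rceil> + 1))) = (\<Prod>r<m. 2 * of_int \<lceil>T r\<rceil> + 1)"
    using T by (intro prod.cong) auto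
  then have "real (card ({..N} \<times> (\<Pi>\<^sub>E r\<in>{..<m}. {-\<lceil>T r\<rceil>..\<lceil>T r\<rceil>}) \<times> (\<Pi>\<^sub>E i\<in>{..<n}. {-K..K})))
      = real (Suc N) * (\<Prod>r<m. 2 * of_int \<lceil>T r\<rceil> + 1) * (2 * of_int K + 1) ^ n"
    using K by (simp add: card_cartesian_product card_PiE algebra_simps)
  also have "\<dots> \<le> ((c + 3) * R) * (\<Prod>r<m. 5 * T r) * (2 * of_int K + 1) ^ n"
  proof (intro mult_mono prod_mono)
    show "real (Suc N) \<le> (c + 3) * R"
      using N R by (simp add: algebra_simps)
    show "0 \<le> 2 * real_of_int \<lceil>T r\<rceil> + 1 \<and> 2 * real_of_int \<lceil>T r\<rceil> + 1 \<le> 5 * T r" if "r \<in> {..<m}" for r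
    proof -
      have "1 \<le> T r" using T that by simp
      moreover have "of_int \<lceil>T r\<rceil> \<le> T r + 1" by (rule of_int_ceiling_le_add_one)
      ultimately show ?thesis by linarith
    qed
  qed (use T K R \<open>0 \<le> c\<close> in \<open>auto intro!: prod_nonneg mult_nonneg_nonneg\<close>)
  also have "\<dots> = (c + 3) * 5 ^ m * (2 * of_int K + 1) ^ n * R * (\<Prod>r<m. T r)"
    by (simp add: prod.distrib)
  finally show ?thesis .
qed

lemma finite_card_lattice_points_near:
  fixes g :: "nat \<Rightarrow> real \<Rightarrow> nat \<Rightarrow> real" and a b M \<sigma> :: real
  assumes ab: "a < b" and m: "0 < m" and M: "M \<ge> 0"
    and bound: "\<And>r t i. r < m \<Longrightarrow> i < n \<Longrightarrow> t \<in> {a..b} \<Longrightarrow> \<bar>g r t i\<bar> \<le> M"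
    and lip: "\<And>r t t' i. r < m \<Longrightarrow> i < n \<Longrightarrow> t \<in> {a..b} \<Longrightarrow> t' \<in> {a..b} \<Longrightarrow>
      \<bar>g r t i - g r t' i\<bar> \<le> M * \<bar>t - t'\<bar>"
  shows "\<exists>C. \<forall>T R. (\<forall>r<m. 1 \<le> T r \<and> T r \<le> R) \<longrightarrow>
    finite (lattice_points_near {a..b} n m g \<sigma> T) \<and>
    real (card (lattice_points_near {a..b} n m g \<sigma> T)) \<le> C * R * (\<Prod>r<m. T r)"
proof -
  define K :: int where "K = \<lceil>\<bar>\<sigma>\<bar> + m * M + 1\<rceil>"
  have "\<bar>\<sigma>\<bar> + m * M + 1 \<le> K" "0 \<le> \<bar>\<sigma>\<bar> + m * M"
    using M unfolding K_def by (simp_all add: le_of_int_ceiling)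
  then have K: "\<sigma> + m * M + 1 \<le> K" "0 \<le> K"
    by linarith+
  show ?thesis
  proof (intro exI[of _ "(b - a + 3) * 5 ^ m * (2 * of_int K + 1) ^ n"] allI impI)
    fix T :: "nat \<Rightarrow> real" and R :: real
    assume T: "\<forall>r<m. 1 \<le> T r \<and> T r \<le> R"
    then have "1 \<le> R"
      using m by force
    define N :: nat where "N = nat \<lceil>(b - a) * R\<rceil> + 1"
    have N: "N > 0" "(b - a) * R \<le> N" "real N \<le> (b - a) * R + 2"
      using ab \<open>1 \<le> R\<close> by (simp_all add: N_def) linarith+
    define codes where "codes = {..N} \<times> (\<Pi>\<^sub>E r\<in>{..<m}. {-\<lceil>T r\<rceil>..\<lceil>T r\<rceil>}) \<times> (\<Pi>\<^sub>E i\<in>{..<n}. {-K..K})"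
    let ?L = "lattice_points_near {a..b} n m g \<sigma> T"
    have "finite codes"
      by (simp add: codes_def finite_PiE)
    moreover have "?L \<subseteq> (\<lambda>(k, \<mu>, w) i. if i < n then w i + round (\<Sum>r<m. of_int (\<mu> r) * g r (a + real k * ((b - a) / N)) i) else 0) ` codes"
      unfolding codes_def using T K(1)
      by (intro lattice_points_near_subset_image[OF ab N(1,2) M bound lip]) auto
    ultimately have "finite ?L" "card ?L \<le> card codes"
      by (auto intro: finite_surj card_image_le order_trans[OF card_mono])
    moreover have "real (card codes) \<le> (b - a + 3) * 5 ^ m * (2 * of_int K + 1) ^ n * R * (\<Prod>r<m. T r)"
      unfolding codes_def using T \<open>1 \<le> R\<close> ab N(3) K(2) by (intro real_card_code_set_le) auto
    ultimately show "finite ?L \<and> real (card ?L) \<le> (b - a + 3) * 5 ^ m * (2 * of_int K + 1) ^ n * R * (\<Prod>r<m. T r)"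
      by (meson of_nat_le_iff order_trans)
  qed
qed

theorem corollary4p2:
  fixes n :: nat and U :: "real set" and f :: "nat \<Rightarrow> real \<Rightarrow> real"
  assumes "n \<ge> 3"
    and "open U" and "{-2..2} \<subseteq> U"
    and "\<And>i. 1 \<le> i \<Longrightarrow> i < n \<Longrightarrow> smooth_on_real U (f i)"
    and "\<And>t. t \<in> U \<Longrightarrow> det (mat n n (\<lambda>(i, j). vder (j + 1) (gam f) t i)) \<noteq> 0"
    and "\<And>t. t \<in> U \<Longrightarrow> frenet n f t n (n - 1) \<noteq> 0"
  shows "\<forall>\<sigma>\<ge>1. \<exists>C. \<forall>T R. (\<forall>r<n-1. \<sigma> \<le> T r \<and> T r \<le> R) \<longrightarrow>
            finite (LT n f \<sigma> T) \<and>
            real (card (LT n f \<sigma> T)) \<le> C * R * (\<Prod>r<n-1. T r)"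
proof (intro allI impI)
  fix \<sigma> :: real assume "1 \<le> \<sigma>"
  define G where "G r t i = (deriv ^^ r) (\<lambda>t. Gfun n f t i) t" for r t i
  have "smooth_on_real U (\<lambda>t. Gfun n f t i)" if "i < n" for i
    using assms that by (intro smooth_on_real_Gfun) auto
  then obtain M where "M > 0"
    and bound: "\<And>r t i. r \<le> n - 1 \<Longrightarrow> i < n \<Longrightarrow> t \<in> {-2..2} \<Longrightarrow> \<bar>G r t i\<bar> \<le> M"
    and lipschitz: "\<And>r t t' i. r < n - 1 \<Longrightarrow> i < n \<Longrightarrow> t \<in> {-2..2} \<Longrightarrow> t' \<in> {-2..2} \<Longrightarrow>
      \<bar>G r t i - G r t' i\<bar> \<le> M * \<bar>t - t'\<bar>"
    using higher_derivs_bounded_lipschitz[OF assms(3), of n "\<lambda>i t. Gfun n f t i" "n - 1"]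
    unfolding G_def by metis
  obtain C where C: "\<forall>T R. (\<forall>r<n - 1. 1 \<le> T r \<and> T r \<le> R) \<longrightarrow>
      finite (lattice_points_near {-2..2} n (n - 1) G \<sigma> T) \<and>
      real (card (lattice_points_near {-2..2} n (n - 1) G \<sigma> T)) \<le> C * R * (\<Prod>r<n - 1. T r)"
    using finite_card_lattice_points_near[OF _ _ less_imp_le[OF \<open>M > 0\<close>] bound lipschitz] assms(1)
    by fastforce
  have LT: "LT n f \<sigma> T = lattice_points_near {-2..2} n (n - 1) G \<sigma> T" for T
    unfolding LT_def FT_def lattice_points_near_def G_def vder_def by auto
  show "\<exists>C. \<forall>T R. (\<forall>r<n - 1. \<sigma> \<le> T r \<and> T r \<le> R) \<longrightarrow>
      finite (LT n f \<sigma> T) \<and> real (card (LT n f \<sigma> T)) \<le> C * R * (\<Prod>r<n - 1. T r)"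
    unfolding LT using C \<open>1 \<le> \<sigma>\<close> by (blast intro: order_trans)
qed

end
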